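(* Let $\Omega\subset\mathbb{R}^d$ be a bounded open set, $q\ge0$ an integer, $\lambda\in\mathbb{R}\setminus\{0\}$, $k\in C^q(\overline{\Omega}\times\overline{\Omega})$, $f\in C^q(\overline{\Omega})$. Let $X=\{x_1,\dots,x_n\}\subset\overline{\Omega}$ and $Y=\{y_1,\dots,y_m\}\subset\overline{\Omega}$ be finite sets, $\vec w\in\mathbb{R}^m$, and $R$ a real $m\times n$ matrix. Define $\mathcal{K}_{\vec h}\colon C^q(\overline{\Omega})\to C^q(\overline{\Omega})$ by $(\mathcal{K}_{\vec h}v)(x)=\sum_{i=1}^m w_i k(x,y_i)\sum_{j=1}^n R_{ij}v(x_j)$. Then the linear system $(\lambda I-KWR)\hat{\vec u}=f|_X$ has solutions if and only if the operator equation $(\lambda\mathcal{I}-\mathcal{K}_{\vec h})u_{\vec h}=f$ has solutions $u_{\vec h}\in C^q(\overline{\Omega})$. Moreover, if the two solution sets are nonempty, they are affine spaces of the same dimension.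
   Context: $C^q(\overline{\Omega})$ denotes functions whose partial derivatives up to order $q$ exist on $\Omega$ and extend continuously to $\overline{\Omega}$. $I$ is the $n\times n$ identity, $\mathcal{I}$ the identity operator, $K$ is the $n\times m$ matrix $K_{ij}=k(x_i,y_j)$, $W=\mathrm{diag}(\vec w)$, and $f|_X=(f(x_1),\dots,f(x_n))^T$. *)

theory Defs
  imports "HOL-Analysis.Analysis" "HOL-Library.Function_Algebras"
begin

fun iter_partial :: "'a::euclidean_space list \<Rightarrow> ('a \<Rightarrow> real) \<Rightarrow> 'a \<Rightarrow> real" where
  "iter_partial [] f = f"
| "iter_partial (b # bs) f = (\<lambda>x. deriv (\<lambda>t. iter_partial bs f (x + t *\<^sub>R b)) 0)"

definition Cq :: "nat \<Rightarrow> 'a::euclidean_space set \<Rightarrow> ('a \<Rightarrow> real) \<Rightarrow> bool" where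
  "Cq q \<Omega> f \<longleftrightarrow>
     continuous_on (closure \<Omega>) f \<and>
     (\<forall>bs. set bs \<subseteq> Basis \<and> length bs < q \<longrightarrow>
        (\<forall>b\<in>Basis. \<forall>x\<in>\<Omega>. (\<lambda>t. iter_partial bs f (x + t *\<^sub>R b)) differentiable (at 0))) \<and>
     (\<forall>bs. set bs \<subseteq> Basis \<and> length bs \<le> q \<longrightarrow>
        (\<exists>g. continuous_on (closure \<Omega>) g \<and> (\<forall>x\<in>\<Omega>. g x = iter_partial bs f x)))"

definition Kh :: "('a \<times> 'a \<Rightarrow> real) \<Rightarrow> ('m::finite \<Rightarrow> 'a) \<Rightarrow> real^'m \<Rightarrow> real^'n^'m
                  \<Rightarrow> ('n::finite \<Rightarrow> 'a) \<Rightarrow> ('a \<Rightarrow> real) \<Rightarrow> 'a \<Rightarrow> real" where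
  "Kh k y w R x v = (\<lambda>z. \<Sum>i\<in>UNIV. w$i * k (z, y i) * (\<Sum>j\<in>UNIV. R$i$j * v (x j)))"

definition fun_scale :: "real \<Rightarrow> ('a \<Rightarrow> real) \<Rightarrow> 'a \<Rightarrow> real" where
  "fun_scale c u = (\<lambda>x. c * u x)"

definition fun_affine :: "('a \<Rightarrow> real) set \<Rightarrow> bool" where
  "fun_affine A \<longleftrightarrow> (\<forall>u\<in>A. \<forall>v\<in>A. \<forall>t::real. (\<lambda>x. t * u x + (1 - t) * v x) \<in> A)"

definition fun_direction :: "('a \<Rightarrow> real) set \<Rightarrow> ('a \<Rightarrow> real) set" where
  "fun_direction A = {(\<lambda>x. u x - v x) | u v. u \<in> A \<and> v \<in> A}"

definition fun_finite_dim :: "('a \<Rightarrow> real) set \<Rightarrow> bool" where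
  "fun_finite_dim A \<longleftrightarrow> (\<exists>B. finite B \<and> fun_direction A \<subseteq> module.span fun_scale B)"

definition fun_aff_dim :: "('a \<Rightarrow> real) set \<Rightarrow> nat" where
  "fun_aff_dim A = vector_space.dim fun_scale (fun_direction A)"

end

theory Submission
  imports Defs
begin

text \<open>
  A solution u of the operator equation satisfies u = (f + K_h u) / \<lambda> on the closure of \<Omega>,
  and K_h u only depends on the samples u(x_j). Hence sampling and the interpolation
  v \<mapsto> (f + \<Sum>_i w_i k(\<cdot>, y_i) \<Sum>_j R_ij v_j) / \<lambda> are mutually inverse bijections between
  the solutions of the linear system and those of the operator equation. The interpolation is an
  affine map that is injective on the solutions of the system, so it preserves affine dimension.

  The only analytic input is that the interpolant is C^q. This needs the sections k(\<cdot>, y) to be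
  C^q also for nodes y on the boundary of \<Omega>: there, their partial derivatives are limits of
  those at interior y, uniformly along lines, because the derivatives of k are uniformly
  continuous on the compact set closure \<Omega> \<times> closure \<Omega>.
\<close>

section \<open>C^q functions with explicit partial derivatives\<close>

text \<open>
  Here D bs plays the role of iter_partial bs u, extended continuously to the closure. Unlike Cq,
  which goes through deriv, this form is closed under linear combinations by the usual rules for
  has_real_derivative.
\<close>

definition Cq_partials :: "nat \<Rightarrow> 'a::euclidean_space set \<Rightarrow> ('a \<Rightarrow> real) \<Rightarrow> ('a list \<Rightarrow> 'a \<Rightarrow> real) \<Rightarrow> bool" where
  "Cq_partials q \<Omega> u D \<longleftrightarrow>
     (\<forall>bs. set bs \<subseteq> Basis \<and> length bs \<le> q \<longrightarrow> continuous_on (closure \<Omega>) (D bs)) \<and>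
     (\<forall>z\<in>\<Omega>. D [] z = u z) \<and>
     (\<forall>bs b z. set bs \<subseteq> Basis \<and> length bs < q \<and> b \<in> Basis \<and> z \<in> \<Omega> \<longrightarrow>
        ((\<lambda>t. D bs (z + t *\<^sub>R b)) has_real_derivative D (b # bs) z) (at 0))"

lemma Cq_partials_continuous_on:
  "Cq_partials q \<Omega> u D \<Longrightarrow> set bs \<subseteq> Basis \<Longrightarrow> length bs \<le> q \<Longrightarrow> continuous_on (closure \<Omega>) (D bs)"
  unfolding Cq_partials_def by blast

lemma Cq_partials_has_real_derivative:
  "Cq_partials q \<Omega> u D \<Longrightarrow> set bs \<subseteq> Basis \<Longrightarrow> length bs < q \<Longrightarrow> b \<in> Basis \<Longrightarrow> z \<in> \<Omega> \<Longrightarrow>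
    ((\<lambda>t. D bs (z + t *\<^sub>R b)) has_real_derivative D (b # bs) z) (at 0)"
  unfolding Cq_partials_def by blast

lemma has_real_derivative_along_line_transform_open:
  fixes F G :: "'a::real_normed_vector \<Rightarrow> real"
  assumes "((\<lambda>t. G (z + t *\<^sub>R b)) has_real_derivative L) (at 0)"
    and "open \<Omega>" "z \<in> \<Omega>" "\<And>p. p \<in> \<Omega> \<Longrightarrow> G p = F p"
  shows "((\<lambda>t. F (z + t *\<^sub>R b)) has_real_derivative L) (at 0)"
proof (rule has_field_derivative_transform_within_open[OF assms(1)])
  show "open ((\<lambda>t::real. z + t *\<^sub>R b) -` \<Omega>)"
    by (rule continuous_open_vimage[OF assms(2)]) (intro continuous_intros)
qed (use assms(3,4) in auto)

lemma Cq_partials_iter_partial: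
  assumes "open \<Omega>" and "Cq_partials q \<Omega> u D"
    and "set bs \<subseteq> Basis" "length bs \<le> q" "z \<in> \<Omega>"
  shows "iter_partial bs u z = D bs z"
  using assms(3-5)
proof (induction bs arbitrary: z)
  case Nil
  then show ?case using assms(2) by (simp add: Cq_partials_def)
next
  case (Cons b bs)
  have "((\<lambda>t. D bs (z + t *\<^sub>R b)) has_real_derivative D (b # bs) z) (at 0)"
    using Cq_partials_has_real_derivative[OF assms(2)] Cons.prems by auto
  then have "((\<lambda>t. iter_partial bs u (z + t *\<^sub>R b)) has_real_derivative D (b # bs) z) (at 0)"
    by (rule has_real_derivative_along_line_transform_open[OF _ assms(1) Cons.prems(3)])
      (use Cons in auto)
  then show ?case by (simp add: DERIV_imp_deriv)
qed

lemma Cq_if_Cq_partials: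
  assumes "open \<Omega>" "continuous_on (closure \<Omega>) u" "Cq_partials q \<Omega> u D"
  shows "Cq q \<Omega> u"
  unfolding Cq_def
proof (intro conjI allI impI ballI assms(2))
  fix bs :: "'a list" and b z :: 'a
  assume bs: "set bs \<subseteq> Basis \<and> length bs < q" and "b \<in> Basis" "z \<in> \<Omega>"
  then have "((\<lambda>t. D bs (z + t *\<^sub>R b)) has_real_derivative D (b # bs) z) (at 0)"
    using Cq_partials_has_real_derivative[OF assms(3)] by auto
  then have "((\<lambda>t. iter_partial bs u (z + t *\<^sub>R b)) has_real_derivative D (b # bs) z) (at 0)"
    by (rule has_real_derivative_along_line_transform_open[OF _ assms(1) \<open>z \<in> \<Omega>\<close>])
      (use Cq_partials_iter_partial[OF assms(1,3)] bs in auto)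
  then show "(\<lambda>t. iter_partial bs u (z + t *\<^sub>R b)) differentiable at 0"
    using real_differentiable_def by blast
next
  fix bs :: "'a list" assume "set bs \<subseteq> Basis \<and> length bs \<le> q"
  then show "\<exists>g. continuous_on (closure \<Omega>) g \<and> (\<forall>x\<in>\<Omega>. g x = iter_partial bs u x)"
    using Cq_partials_iter_partial[OF assms(1,3)] Cq_partials_continuous_on[OF assms(3)]
    by (intro exI[of _ "D bs"]) auto
qed

lemma Cq_imp_Cq_partials:
  assumes "open \<Omega>" "Cq q \<Omega> u"
  obtains D where "Cq_partials q \<Omega> u D"
proof
  define D where
    "D bs = (SOME g. continuous_on (closure \<Omega>) g \<and> (\<forall>z\<in>\<Omega>. g z = iter_partial bs u z))" for bs
  have D: "continuous_on (closure \<Omega>) (D bs) \<and> (\<forall>z\<in>\<Omega>. D bs z = iter_partial bs u z)"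
    if "set bs \<subseteq> Basis" "length bs \<le> q" for bs
  proof -
    have "\<exists>g. continuous_on (closure \<Omega>) g \<and> (\<forall>z\<in>\<Omega>. g z = iter_partial bs u z)"
      using assms(2) that by (auto simp: Cq_def)
    then show ?thesis unfolding D_def by (rule someI_ex)
  qed
  show "Cq_partials q \<Omega> u D"
    unfolding Cq_partials_def
  proof (intro conjI allI impI ballI)
    fix bs :: "'a list" and b z :: 'a
    assume bs: "set bs \<subseteq> Basis \<and> length bs < q \<and> b \<in> Basis \<and> z \<in> \<Omega>"
    then have "((\<lambda>t. iter_partial bs u (z + t *\<^sub>R b)) has_real_derivative iter_partial (b # bs) u z) (at 0)"
      using assms(2) DERIV_deriv_iff_real_differentiable by (force simp: Cq_def)
    moreover have "iter_partial (b # bs) u z = D (b # bs) z"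
      using D[of "b # bs"] bs by auto
    ultimately show "((\<lambda>t. D bs (z + t *\<^sub>R b)) has_real_derivative D (b # bs) z) (at 0)"
      using has_real_derivative_along_line_transform_open[OF _ assms(1)] D[of bs] bs by auto
  qed (use D in auto)
qed

lemma Cq_partials_Nil_on_closure:
  assumes "Cq_partials q \<Omega> u D" "continuous_on (closure \<Omega>) u" "z \<in> closure \<Omega>"
  shows "D [] z = u z"
proof -
  have "continuous_on (closure \<Omega>) (\<lambda>p. D [] p - u p)"
    using Cq_partials_continuous_on[OF assms(1), of "[]"] assms(2) by (intro continuous_on_diff) auto
  moreover have "D [] p - u p = 0" if "p \<in> \<Omega>" for p
    using assms(1) that by (simp add: Cq_partials_def)
  ultimately have "D [] z - u z = 0"
    using assms(3) by (rule continuous_constant_on_closure)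
  then show ?thesis by simp
qed

lemma Cq_partials_scale:
  assumes "Cq_partials q \<Omega> u D"
  shows "Cq_partials q \<Omega> (\<lambda>z. c * u z) (\<lambda>bs z. c * D bs z)"
  using assms unfolding Cq_partials_def by (auto intro!: continuous_intros DERIV_cmult)

lemma Cq_partials_add:
  assumes "Cq_partials q \<Omega> u D" "Cq_partials q \<Omega> v E"
  shows "Cq_partials q \<Omega> (\<lambda>z. u z + v z) (\<lambda>bs z. D bs z + E bs z)"
  using assms unfolding Cq_partials_def by (auto intro!: continuous_intros DERIV_add)

lemma Cq_partials_sum:
  assumes "\<And>i. i \<in> I \<Longrightarrow> Cq_partials q \<Omega> (u i) (D i)"
  shows "Cq_partials q \<Omega> (\<lambda>z. \<Sum>i\<in>I. u i z) (\<lambda>bs z. \<Sum>i\<in>I. D i bs z)"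
  using assms unfolding Cq_partials_def by (auto intro!: continuous_intros DERIV_sum)

lemma Cq_scale:
  assumes "open \<Omega>" "Cq q \<Omega> u"
  shows "Cq q \<Omega> (\<lambda>z. c * u z)"
proof -
  obtain D where "Cq_partials q \<Omega> u D" using Cq_imp_Cq_partials[OF assms] .
  moreover have "continuous_on (closure \<Omega>) u" using assms(2) by (simp add: Cq_def)
  ultimately show ?thesis
    by (intro Cq_if_Cq_partials[OF assms(1) _ Cq_partials_scale] continuous_intros)
qed

lemma Cq_add:
  assumes "open \<Omega>" "Cq q \<Omega> u" "Cq q \<Omega> v"
  shows "Cq q \<Omega> (\<lambda>z. u z + v z)"
proof -
  obtain D E where "Cq_partials q \<Omega> u D" "Cq_partials q \<Omega> v E"
    using Cq_imp_Cq_partials[OF assms(1)] assms(2,3) by metis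
  moreover have "continuous_on (closure \<Omega>) u" "continuous_on (closure \<Omega>) v"
    using assms(2,3) by (simp_all add: Cq_def)
  ultimately show ?thesis
    by (intro Cq_if_Cq_partials[OF assms(1) _ Cq_partials_add] continuous_intros)
qed

lemma Cq_sum:
  assumes "open \<Omega>" "\<And>i. i \<in> I \<Longrightarrow> Cq q \<Omega> (u i)"
  shows "Cq q \<Omega> (\<lambda>z. \<Sum>i\<in>I. u i z)"
proof -
  have "\<forall>i\<in>I. \<exists>D. Cq_partials q \<Omega> (u i) D"
    using Cq_imp_Cq_partials[OF assms(1) assms(2)] by metis
  then obtain D where "\<And>i. i \<in> I \<Longrightarrow> Cq_partials q \<Omega> (u i) (D i)"
    by (metis bchoice)
  moreover have "\<And>i. i \<in> I \<Longrightarrow> continuous_on (closure \<Omega>) (u i)"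
    using assms(2) by (simp add: Cq_def)
  ultimately show ?thesis
    by (intro Cq_if_Cq_partials[OF assms(1) _ Cq_partials_sum] continuous_intros)
qed

lemma Cq_cong_closure:
  assumes "open \<Omega>" "Cq q \<Omega> u" "\<And>z. z \<in> closure \<Omega> \<Longrightarrow> u z = v z"
  shows "Cq q \<Omega> v"
proof -
  obtain D where "Cq_partials q \<Omega> u D" using Cq_imp_Cq_partials[OF assms(1,2)] .
  then have "Cq_partials q \<Omega> v D"
    using assms(3) closure_subset unfolding Cq_partials_def by auto
  moreover have "continuous_on (closure \<Omega>) v"
    using assms(2,3) continuous_on_cong[of "closure \<Omega>" "closure \<Omega>" u v] by (simp add: Cq_def)
  ultimately show ?thesis using Cq_if_Cq_partials[OF assms(1)] by blast
qed

section \<open>Sections of a C^q kernel\<close>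

lemma real_increment_le_by_derivative:
  fixes \<phi> \<phi>' :: "real \<Rightarrow> real"
  assumes "\<And>s. \<bar>s\<bar> < \<delta> \<Longrightarrow> (\<phi> has_real_derivative \<phi>' s) (at s)"
    and "\<And>s. \<bar>s\<bar> < \<delta> \<Longrightarrow> \<bar>\<phi>' s - c\<bar> \<le> e" and "\<bar>t\<bar> < \<delta>"
  shows "\<bar>\<phi> t - \<phi> 0 - t * c\<bar> \<le> e * \<bar>t\<bar>"
proof -
  have "norm ((\<phi> t - t * c) - (\<phi> 0 - 0 * c)) \<le> e * norm (t - 0)"
  proof (rule field_differentiable_bound[OF convex_ball])
    fix s :: real assume "s \<in> ball 0 \<delta>"
    then have "\<bar>s\<bar> < \<delta>" by simp
    have "((\<lambda>s. \<phi> s - s * c) has_real_derivative \<phi>' s - 1 * c) (at s)"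
      by (intro DERIV_diff DERIV_cmult_right DERIV_ident assms(1)[OF \<open>\<bar>s\<bar> < \<delta>\<close>])
    then show "((\<lambda>s. \<phi> s - s * c) has_real_derivative \<phi>' s - c) (at s within ball 0 \<delta>)"
      by (simp add: has_field_derivative_at_within)
    show "norm (\<phi>' s - c) \<le> e" using assms(2)[OF \<open>\<bar>s\<bar> < \<delta>\<close>] by simp
  next
    show "t \<in> ball 0 \<delta>" "0 \<in> ball 0 \<delta>" using assms(3) by auto
  qed
  then show ?thesis by (simp add: algebra_simps)
qed

lemma uniform_line_increment_bound:
  fixes H G :: "'a::real_normed_vector \<times> 'b::metric_space \<Rightarrow> real"
  assumes "open \<Omega>" "uniformly_continuous_on C G" "\<Omega> \<times> Y \<subseteq> C"
    and dH: "\<And>z y. z \<in> \<Omega> \<Longrightarrow> y \<in> Y \<Longrightarrow>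
               ((\<lambda>t. H (z + t *\<^sub>R b, y)) has_real_derivative G (z, y)) (at 0)"
    and z: "z \<in> \<Omega>" and "e > 0"
  obtains \<delta> where "\<delta> > 0"
    and "\<And>t. \<bar>t\<bar> < \<delta> \<Longrightarrow> z + t *\<^sub>R b \<in> \<Omega>"
    and "\<And>t y. \<bar>t\<bar> < \<delta> \<Longrightarrow> y \<in> Y \<Longrightarrow> \<bar>H (z + t *\<^sub>R b, y) - H (z, y) - t * G (z, y)\<bar> \<le> e * \<bar>t\<bar>"
proof -
  obtain d where d: "d > 0" "\<And>p p'. p \<in> C \<Longrightarrow> p' \<in> C \<Longrightarrow> dist p' p < d \<Longrightarrow> dist (G p') (G p) < e"
    using assms(2) \<open>e > 0\<close> unfolding uniformly_continuous_on_def by metis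
  obtain r where "r > 0" "ball z r \<subseteq> \<Omega>" using assms(1) z open_contains_ball by blast
  define \<delta> where "\<delta> = min r d / (norm b + 1)"
  have "\<delta> > 0" using d \<open>r > 0\<close> by (simp add: \<delta>_def add_nonneg_pos)
  have near: "z + s *\<^sub>R b \<in> \<Omega> \<and> \<bar>s\<bar> * norm b < d" if "\<bar>s\<bar> < \<delta>" for s
  proof -
    have "\<bar>s\<bar> * norm b \<le> \<bar>s\<bar> * (norm b + 1)" by (simp add: mult_left_mono)
    also have "\<dots> < min r d"
      using that add_nonneg_pos[OF norm_ge_zero zero_less_one, of b]
      unfolding \<delta>_def by (simp only: pos_less_divide_eq)
    finally have "\<bar>s\<bar> * norm b < min r d" .
    moreover have "dist z (z + s *\<^sub>R b) = \<bar>s\<bar> * norm b" by (simp add: dist_norm)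
    ultimately show ?thesis using \<open>ball z r \<subseteq> \<Omega>\<close> by auto
  qed
  have bound: "\<bar>H (z + t *\<^sub>R b, y) - H (z, y) - t * G (z, y)\<bar> \<le> e * \<bar>t\<bar>"
    if "\<bar>t\<bar> < \<delta>" "y \<in> Y" for t y
  proof -
    have "((\<lambda>t. H (z + t *\<^sub>R b, y)) has_real_derivative G (z + s *\<^sub>R b, y)) (at s)"
      if "\<bar>s\<bar> < \<delta>" for s
    proof -
      have "((\<lambda>u. H ((z + s *\<^sub>R b) + u *\<^sub>R b, y)) has_real_derivative G (z + s *\<^sub>R b, y)) (at 0)"
        using dH near[OF that] \<open>y \<in> Y\<close> by blast
      moreover have "(\<lambda>u. H ((z + s *\<^sub>R b) + u *\<^sub>R b, y)) = (\<lambda>u. H (z + (u + s) *\<^sub>R b, y))"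
        by (simp add: algebra_simps)
      ultimately show ?thesis using DERIV_shift[of "\<lambda>t. H (z + t *\<^sub>R b, y)" _ 0 s] by simp
    qed
    moreover have "\<bar>G (z + s *\<^sub>R b, y) - G (z, y)\<bar> \<le> e" if "\<bar>s\<bar> < \<delta>" for s
    proof -
      have "(z, y) \<in> C" "(z + s *\<^sub>R b, y) \<in> C"
        using near[OF that] z \<open>y \<in> Y\<close> assms(3) by auto
      moreover have "dist (z + s *\<^sub>R b, y) (z, y) < d"
        using near[OF that] by (simp add: dist_Pair_Pair dist_norm)
      ultimately show ?thesis using d(2) by (fastforce simp: dist_real_def)
    qed
    ultimately have "\<bar>H (z + t *\<^sub>R b, y) - H (z + 0 *\<^sub>R b, y) - t * G (z, y)\<bar> \<le> e * \<bar>t\<bar>"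
      by (intro real_increment_le_by_derivative[OF _ _ \<open>\<bar>t\<bar> < \<delta>\<close>])
    then show ?thesis by simp
  qed
  from near have "z + t *\<^sub>R b \<in> \<Omega>" if "\<bar>t\<bar> < \<delta>" for t
    using that by blast
  from that[OF \<open>\<delta> > 0\<close> this bound] show ?thesis .
qed

lemma has_real_derivative_section_at_closure:
  fixes H G :: "'a::euclidean_space \<times> 'b::euclidean_space \<Rightarrow> real"
  assumes "open \<Omega>" "bounded \<Omega>" "bounded Y"
    and cH: "continuous_on (closure \<Omega> \<times> closure Y) H"
    and cG: "continuous_on (closure \<Omega> \<times> closure Y) G"
    and dH: "\<And>z y. z \<in> \<Omega> \<Longrightarrow> y \<in> Y \<Longrightarrow>
               ((\<lambda>t. H (z + t *\<^sub>R b, y)) has_real_derivative G (z, y)) (at 0)"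
    and z: "z \<in> \<Omega>" and y0: "y0 \<in> closure Y"
  shows "((\<lambda>t. H (z + t *\<^sub>R b, y0)) has_real_derivative G (z, y0)) (at 0)"
  unfolding has_field_derivative_def has_derivative_at_alt
proof (intro conjI allI impI bounded_linear_mult_right)
  fix e :: real assume "e > 0"
  have "uniformly_continuous_on (closure \<Omega> \<times> closure Y) G"
    using assms(2,3) cG by (intro compact_uniformly_continuous) (auto simp: compact_Times)
  moreover have "\<Omega> \<times> Y \<subseteq> closure \<Omega> \<times> closure Y"
    by (intro Sigma_mono closure_subset)
  ultimately obtain \<delta> where "\<delta> > 0" and near: "\<And>t. \<bar>t\<bar> < \<delta> \<Longrightarrow> z + t *\<^sub>R b \<in> \<Omega>"
    and bound: "\<And>t y. \<bar>t\<bar> < \<delta> \<Longrightarrow> y \<in> Y \<Longrightarrow>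
                  \<bar>H (z + t *\<^sub>R b, y) - H (z, y) - t * G (z, y)\<bar> \<le> e * \<bar>t\<bar>"
    by (rule uniform_line_increment_bound[OF assms(1) _ _ dH z \<open>e > 0\<close>]) blast+
  show "\<exists>\<delta>>0. \<forall>t. norm (t - 0) < \<delta> \<longrightarrow>
      norm (H (z + t *\<^sub>R b, y0) - H (z + 0 *\<^sub>R b, y0) - G (z, y0) * (t - 0)) \<le> e * norm (t - 0)"
  proof (intro exI[of _ \<delta>] conjI allI impI \<open>\<delta> > 0\<close>)
    fix t :: real assume "norm (t - 0) < \<delta>"
    then have "\<bar>t\<bar> < \<delta>" by simp
    have "z + t *\<^sub>R b \<in> closure \<Omega>" "z \<in> closure \<Omega>"
      using near[OF \<open>\<bar>t\<bar> < \<delta>\<close>] z closure_subset by auto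
    then have "continuous_on (closure Y) (\<lambda>y. \<bar>H (z + t *\<^sub>R b, y) - H (z, y) - t * G (z, y)\<bar>)"
      by (intro continuous_intros continuous_on_compose2[OF cH] continuous_on_compose2[OF cG]) auto
    then show "norm (H (z + t *\<^sub>R b, y0) - H (z + 0 *\<^sub>R b, y0) - G (z, y0) * (t - 0)) \<le> e * norm (t - 0)"
      using continuous_le_on_closure[OF _ y0] bound[OF \<open>\<bar>t\<bar> < \<delta>\<close>] by (fastforce simp: mult.commute)
  qed
qed

lemma Cq_partials_section:
  fixes k :: "'a::euclidean_space \<times> 'a \<Rightarrow> real"
  assumes "open \<Omega>" "bounded \<Omega>" "continuous_on (closure \<Omega> \<times> closure \<Omega>) k"
    and Dk: "Cq_partials q (\<Omega> \<times> \<Omega>) k Dk" and y0: "y0 \<in> closure \<Omega>"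
  shows "Cq_partials q \<Omega> (\<lambda>z. k (z, y0)) (\<lambda>bs z. Dk (map (\<lambda>b. (b, 0)) bs) (z, y0))"
proof -
  have emb_Basis: "set (map (\<lambda>b. (b, 0)) bs) \<subseteq> Basis" if "set bs \<subseteq> Basis" for bs :: "'a list"
    using that by (auto simp: Basis_prod_def)
  have cont: "continuous_on (closure \<Omega> \<times> closure \<Omega>) (Dk (map (\<lambda>b. (b, 0)) bs))"
    if "set bs \<subseteq> Basis" "length bs \<le> q" for bs
    using Cq_partials_continuous_on[OF Dk emb_Basis[OF that(1)]] that(2) by (simp add: closure_Times)
  show ?thesis
    unfolding Cq_partials_def
  proof (intro conjI allI impI ballI)
    fix bs :: "'a list" assume "set bs \<subseteq> Basis \<and> length bs \<le> q"
    then show "continuous_on (closure \<Omega>) (\<lambda>z. Dk (map (\<lambda>b. (b, 0)) bs) (z, y0))"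
      using y0 by (intro continuous_on_compose2[OF cont] continuous_intros) auto
  next
    fix z assume "z \<in> \<Omega>"
    then show "Dk (map (\<lambda>b. (b, 0)) []) (z, y0) = k (z, y0)"
      using Cq_partials_Nil_on_closure[OF Dk] assms(3) y0 closure_subset
      by (auto simp: closure_Times)
  next
    fix bs :: "'a list" and b z :: 'a
    assume a: "set bs \<subseteq> Basis \<and> length bs < q \<and> b \<in> Basis \<and> z \<in> \<Omega>"
    show "((\<lambda>t. Dk (map (\<lambda>b. (b, 0)) bs) (z + t *\<^sub>R b, y0)) has_real_derivative
            Dk (map (\<lambda>b. (b, 0)) (b # bs)) (z, y0)) (at 0)"
    proof (rule has_real_derivative_section_at_closure[OF assms(1,2,2) cont cont _ _ y0])
      fix z' y assume "z' \<in> \<Omega>" "y \<in> \<Omega>"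
      moreover have "set (map (\<lambda>b. (b, 0)) bs) \<subseteq> Basis" "(b, 0) \<in> Basis"
        using a emb_Basis[of bs] emb_Basis[of "[b]"] by auto
      ultimately show "((\<lambda>t. Dk (map (\<lambda>b. (b, 0)) bs) (z' + t *\<^sub>R b, y)) has_real_derivative
                   Dk (map (\<lambda>b. (b, 0)) (b # bs)) (z', y)) (at 0)"
        using Cq_partials_has_real_derivative[OF Dk, of "map (\<lambda>b. (b, 0)) bs" "(b, 0)" "(z', y)"] a
        by simp
    qed (use a in auto)
  qed
qed

lemma Cq_kernel_section:
  fixes k :: "'a::euclidean_space \<times> 'a \<Rightarrow> real"
  assumes "open \<Omega>" "bounded \<Omega>" "Cq q (\<Omega> \<times> \<Omega>) k" and "y0 \<in> closure \<Omega>"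
  shows "Cq q \<Omega> (\<lambda>z. k (z, y0))"
proof -
  have ck: "continuous_on (closure \<Omega> \<times> closure \<Omega>) k"
    using assms(3) by (simp add: Cq_def closure_Times)
  obtain Dk where "Cq_partials q (\<Omega> \<times> \<Omega>) k Dk"
    using Cq_imp_Cq_partials assms(1,3) open_Times by blast
  then have "Cq_partials q \<Omega> (\<lambda>z. k (z, y0)) (\<lambda>bs z. Dk (map (\<lambda>b. (b, 0)) bs) (z, y0))"
    using Cq_partials_section[OF assms(1,2) ck _ assms(4)] by blast
  moreover have "continuous_on (closure \<Omega>) (\<lambda>z. k (z, y0))"
    using assms(4) by (intro continuous_on_compose2[OF ck] continuous_intros) auto
  ultimately show ?thesis using Cq_if_Cq_partials[OF assms(1)] by blast
qed

section \<open>Affine images in the space of real functions\<close>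

lemma vector_space_fun_scale: "vector_space (fun_scale :: real \<Rightarrow> ('a \<Rightarrow> real) \<Rightarrow> 'a \<Rightarrow> real)"
  by unfold_locales (auto simp: fun_scale_def fun_eq_iff algebra_simps)

lemma linear_fun_scaleI:
  fixes \<Psi> :: "'b::real_vector \<Rightarrow> 'a \<Rightarrow> real"
  assumes "\<And>u v z. \<Psi> (u + v) z = \<Psi> u z + \<Psi> v z" and "\<And>c u z. \<Psi> (c *\<^sub>R u) z = c * \<Psi> u z"
  shows "Vector_Spaces.linear (*\<^sub>R) fun_scale \<Psi>"
  unfolding Vector_Spaces.linear_iff
proof (intro conjI allI vector_space_fun_scale)
  show "vector_space ((*\<^sub>R) :: real \<Rightarrow> 'b \<Rightarrow> 'b)"
    by unfold_locales (auto simp: algebra_simps)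
qed (use assms in \<open>auto simp: fun_eq_iff fun_scale_def\<close>)

lemma fun_affine_affine_image:
  fixes \<Psi> :: "'b::real_vector \<Rightarrow> 'a \<Rightarrow> real"
  assumes "Vector_Spaces.linear (*\<^sub>R) fun_scale \<Psi>" "affine S"
  shows "fun_affine ((\<lambda>v. c + \<Psi> v) ` S)"
  unfolding fun_affine_def
proof (intro ballI allI)
  interpret \<Psi>: Vector_Spaces.linear "(*\<^sub>R)" fun_scale \<Psi> by fact
  fix u v t assume "u \<in> (\<lambda>v. c + \<Psi> v) ` S" "v \<in> (\<lambda>v. c + \<Psi> v) ` S"
  then obtain a b where ab: "a \<in> S" "b \<in> S" "u = c + \<Psi> a" "v = c + \<Psi> b" by blast
  have "(\<lambda>z. t * u z + (1 - t) * v z) = c + \<Psi> (t *\<^sub>R a + (1 - t) *\<^sub>R b)"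
    unfolding ab(3,4) \<Psi>.add \<Psi>.scale by (simp add: fun_scale_def fun_eq_iff algebra_simps)
  moreover have "t *\<^sub>R a + (1 - t) *\<^sub>R b \<in> S"
    using assms(2) ab(1,2) unfolding affine_def by simp
  ultimately show "(\<lambda>z. t * u z + (1 - t) * v z) \<in> (\<lambda>v. c + \<Psi> v) ` S" by blast
qed

lemma fun_direction_affine_image:
  fixes \<Psi> :: "'b::real_vector \<Rightarrow> 'a \<Rightarrow> real"
  assumes "Vector_Spaces.linear (*\<^sub>R) fun_scale \<Psi>" "affine S" "a \<in> S"
  shows "fun_direction ((\<lambda>v. c + \<Psi> v) ` S) = \<Psi> ` (\<lambda>v. v - a) ` S"
proof -
  interpret \<Psi>: Vector_Spaces.linear "(*\<^sub>R)" fun_scale \<Psi> by fact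
  have diff: "(\<lambda>z. (c + \<Psi> u) z - (c + \<Psi> v) z) = \<Psi> (u - v)" for u v
    by (simp add: \<Psi>.diff fun_eq_iff)
  show ?thesis
  proof
    show "fun_direction ((\<lambda>v. c + \<Psi> v) ` S) \<subseteq> \<Psi> ` (\<lambda>v. v - a) ` S"
    proof
      fix g assume "g \<in> fun_direction ((\<lambda>v. c + \<Psi> v) ` S)"
      then obtain u v where "u \<in> S" "v \<in> S" "g = \<Psi> (u - v)"
        unfolding fun_direction_def using diff by auto
      moreover have "u - v + a \<in> S"
        using mem_affine_3_minus[OF assms(2) \<open>u \<in> S\<close> assms(3) \<open>v \<in> S\<close>, of 1] by (simp add: algebra_simps)
      ultimately show "g \<in> \<Psi> ` (\<lambda>v. v - a) ` S"
        by (metis add_diff_cancel image_eqI)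
    qed
    show "\<Psi> ` (\<lambda>v. v - a) ` S \<subseteq> fun_direction ((\<lambda>v. c + \<Psi> v) ` S)"
      unfolding fun_direction_def using diff[symmetric] assms(3) by blast
  qed
qed

lemma fun_finite_dim_affine_image:
  fixes \<Psi> :: "'b::euclidean_space \<Rightarrow> 'a \<Rightarrow> real"
  assumes "Vector_Spaces.linear (*\<^sub>R) fun_scale \<Psi>"
  shows "fun_finite_dim ((\<lambda>v. c + \<Psi> v) ` S)"
  unfolding fun_finite_dim_def
proof (intro exI conjI)
  interpret \<Psi>: Vector_Spaces.linear "(*\<^sub>R)" fun_scale \<Psi> by fact
  show "finite (\<Psi> ` Basis)" by simp
  have "module.span (*\<^sub>R) (Basis :: 'b set) = UNIV"
    using span_Basis unfolding span_raw_def .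
  then have "module.span fun_scale (\<Psi> ` Basis) = range \<Psi>"
    using \<Psi>.span_image[of Basis] by simp
  moreover have "(\<lambda>z. (c + \<Psi> u) z - (c + \<Psi> v) z) = \<Psi> (u - v)" for u v
    by (simp add: \<Psi>.diff fun_eq_iff)
  ultimately show "fun_direction ((\<lambda>v. c + \<Psi> v) ` S) \<subseteq> module.span fun_scale (\<Psi> ` Basis)"
    unfolding fun_direction_def by auto
qed

lemma fun_aff_dim_affine_image:
  fixes \<Psi> :: "'b::euclidean_space \<Rightarrow> 'a \<Rightarrow> real"
  assumes lin: "Vector_Spaces.linear (*\<^sub>R) fun_scale \<Psi>" and "affine S" "a \<in> S"
    and inj: "inj_on (\<lambda>v. c + \<Psi> v) S"
  shows "int (fun_aff_dim ((\<lambda>v. c + \<Psi> v) ` S)) = aff_dim S"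
proof -
  interpret \<Psi>: Vector_Spaces.linear "(*\<^sub>R)" fun_scale \<Psi> by fact
  interpret finite_dimensional_vector_space_pair_1 "(*\<^sub>R) :: real \<Rightarrow> 'b \<Rightarrow> 'b" Basis
    "fun_scale :: real \<Rightarrow> ('a \<Rightarrow> real) \<Rightarrow> 'a \<Rightarrow> real"
    using vector_space_fun_scale by unfold_locales
  define N where "N = (\<lambda>v. v - a) ` S"
  have "subspace N"
    using affine_diffs_subspace[OF assms(2,3)] by (simp add: N_def)
  then have "span N = N" by (simp add: span_eq_iff)
  moreover have "inj_on \<Psi> N"
  proof (rule inj_onI)
    fix d1 d2 assume "d1 \<in> N" "d2 \<in> N" "\<Psi> d1 = \<Psi> d2"
    then obtain u v where "u \<in> S" "v \<in> S" "d1 = u - a" "d2 = v - a" "c + \<Psi> u = c + \<Psi> v"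
      by (auto simp: N_def \<Psi>.diff)
    then show "d1 = d2" using inj_onD[OF inj, of u v] by simp
  qed
  ultimately have "vector_space.dim fun_scale (\<Psi> ` N) = dim N"
    using dim_image_eq[OF lin] by (simp add: dim_raw_def span_raw_def)
  then show ?thesis
    using fun_direction_affine_image[OF assms(1-3)] aff_dim_eq_dim_subtract[of a S] hull_inc[OF assms(3)]
    by (simp add: fun_aff_dim_def N_def)
qed

section \<open>The Nystr\<ouml>m system and its interpolant\<close>

lemma affine_matrix_vector_solutions:
  fixes A :: "real^'n^'m"
  shows "affine {v. A *v v = b}"
  unfolding affine_def
proof (intro ballI allI impI)
  fix u v :: "real^'n" and s t :: real
  assume "u \<in> {v. A *v v = b}" "v \<in> {v. A *v v = b}" "s + t = 1"
  then show "s *\<^sub>R u + t *\<^sub>R v \<in> {v. A *v v = b}"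
    by (simp add: matrix_vector_right_distrib matrix_vector_mult_scaleR flip: scaleR_add_left)
qed

lemma nystrom_matrix_mult_vec:
  fixes k :: "'a \<times> 'a \<Rightarrow> real" and x :: "'n::finite \<Rightarrow> 'a" and y :: "'m::finite \<Rightarrow> 'a"
    and w :: "real^'m" and R :: "real^'n^'m" and v :: "real^'n"
  shows "(lam *\<^sub>R mat 1 - ((\<chi> i j. k (x i, y j)) :: real^'m^'n)
            ** ((\<chi> i j. if i = j then w$i else 0) :: real^'m^'m) ** R) *v v
       = (\<chi> j. lam * v$j - (\<Sum>i\<in>UNIV. w$i * k (x j, y i) * (\<Sum>l\<in>UNIV. R$i$l * v$l)))"
proof -
  have "((\<chi> i j. if i = j then w$i else 0) :: real^'m^'m) *v u = (\<chi> i. w$i * u$i)" for u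
    by (simp add: vec_eq_iff matrix_vector_mult_def if_distrib[of "\<lambda>a. a * _"] cong: if_cong)
  moreover have "(lam *\<^sub>R mat 1) *v v = lam *\<^sub>R v"
    by (metis scaleR_matrix_vector_assoc matrix_vector_mul_lid)
  ultimately show ?thesis
    by (simp add: matrix_vector_mult_diff_rdistrib flip: matrix_vector_mul_assoc)
      (simp add: vec_eq_iff matrix_vector_mult_def algebra_simps sum_distrib_left)
qed

definition nystrom_interpolant ::
    "'a set \<Rightarrow> real \<Rightarrow> ('a \<Rightarrow> real) \<Rightarrow> (real^'n \<Rightarrow> 'a \<Rightarrow> real) \<Rightarrow> real^'n \<Rightarrow> 'a \<Rightarrow> real" where
  "nystrom_interpolant C lam f L v = (\<lambda>z. if z \<in> C then (f z + L v z) / lam else 0)"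

lemma nystrom_interpolant_samples:
  fixes L :: "real^'n::finite \<Rightarrow> 'a \<Rightarrow> real"
  assumes "lam \<noteq> 0" "\<And>j. x j \<in> C" "\<forall>j. lam * v$j - L v (x j) = f (x j)"
  shows "(\<chi> j. nystrom_interpolant C lam f L v (x j)) = v"
  using assms by (simp add: nystrom_interpolant_def vec_eq_iff field_simps)

lemma nystrom_solutions_eq_image:
  fixes L :: "real^'n::finite \<Rightarrow> 'a \<Rightarrow> real"
  assumes "lam \<noteq> 0" "\<And>j. x j \<in> C" "\<And>v. P (nystrom_interpolant C lam f L v)"
  shows "{u. P u \<and> (\<forall>z. z \<notin> C \<longrightarrow> u z = 0) \<and> (\<forall>z\<in>C. lam * u z - L (\<chi> j. u (x j)) z = f z)}
       = nystrom_interpolant C lam f L ` {v. \<forall>j. lam * v$j - L v (x j) = f (x j)}"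
    (is "?T = ?\<Phi> ` ?S")
proof
  show "?T \<subseteq> ?\<Phi> ` ?S"
  proof
    fix u assume u: "u \<in> ?T"
    then have "u = ?\<Phi> (\<chi> j. u (x j))"
      using assms(1) by (auto simp: nystrom_interpolant_def fun_eq_iff field_simps)
    moreover have "(\<chi> j. u (x j)) \<in> ?S"
      using u assms(2) by auto
    ultimately show "u \<in> ?\<Phi> ` ?S" by blast
  qed
  show "?\<Phi> ` ?S \<subseteq> ?T"
  proof
    fix u assume "u \<in> ?\<Phi> ` ?S"
    then obtain v where v: "v \<in> ?S" "u = ?\<Phi> v" by blast
    then have "(\<chi> j. u (x j)) = v"
      using nystrom_interpolant_samples[OF assms(1,2)] by auto
    then show "u \<in> ?T"
      using v assms(1,3) by (auto simp: nystrom_interpolant_def field_simps)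
  qed
qed

lemma inj_on_nystrom_interpolant:
  fixes L :: "real^'n::finite \<Rightarrow> 'a \<Rightarrow> real"
  assumes "lam \<noteq> 0" "\<And>j. x j \<in> C"
  shows "inj_on (nystrom_interpolant C lam f L) {v. \<forall>j. lam * v$j - L v (x j) = f (x j)}"
  by (rule inj_on_inverseI[where g = "\<lambda>u. \<chi> j. u (x j)"])
    (use nystrom_interpolant_samples[OF assms] in auto)

lemma nystrom_interpolant_affine:
  fixes L :: "real^'n::finite \<Rightarrow> 'a \<Rightarrow> real"
  assumes "\<And>u v z. L (u + v) z = L u z + L v z" and "\<And>a u z. L (a *\<^sub>R u) z = a * L u z"
  obtains c \<Psi> where "Vector_Spaces.linear (*\<^sub>R) fun_scale \<Psi>"
    and "nystrom_interpolant C lam f L = (\<lambda>v. c + \<Psi> v)"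
proof
  show "Vector_Spaces.linear (*\<^sub>R) fun_scale (\<lambda>v z. if z \<in> C then L v z / lam else 0)"
    by (rule linear_fun_scaleI) (simp_all add: assms add_divide_distrib)
  show "nystrom_interpolant C lam f L =
      (\<lambda>v. (\<lambda>z. if z \<in> C then f z / lam else 0) + (\<lambda>z. if z \<in> C then L v z / lam else 0))"
    by (simp add: nystrom_interpolant_def fun_eq_iff add_divide_distrib)
qed

lemma Cq_nystrom_interpolant:
  fixes k :: "'a::euclidean_space \<times> 'a \<Rightarrow> real" and y :: "'m::finite \<Rightarrow> 'a"
  assumes "open \<Omega>" "bounded \<Omega>" "Cq q (\<Omega> \<times> \<Omega>) k" "Cq q \<Omega> f" "\<And>i. y i \<in> closure \<Omega>"
  shows "Cq q \<Omega> (nystrom_interpolant (closure \<Omega>) lam f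
                    (\<lambda>v z. \<Sum>i\<in>UNIV. w$i * k (z, y i) * (\<Sum>l\<in>UNIV. R$i$l * v$l)) v)"
proof (rule Cq_cong_closure[OF assms(1)])
  show "Cq q \<Omega> (\<lambda>z. 1 / lam * f z + (\<Sum>i\<in>UNIV. (w$i * (\<Sum>l\<in>UNIV. R$i$l * v$l) / lam) * k (z, y i)))"
    using assms by (intro Cq_add Cq_scale Cq_sum Cq_kernel_section) auto
qed (simp add: nystrom_interpolant_def add_divide_distrib sum_divide_distrib algebra_simps)

theorem proposition3p7:
  fixes \<Omega> :: "'a::euclidean_space set"
    and q :: nat
    and lam :: real
    and k :: "'a \<times> 'a \<Rightarrow> real"
    and f :: "'a \<Rightarrow> real"
    and x :: "'n::finite \<Rightarrow> 'a"
    and y :: "'m::finite \<Rightarrow> 'a"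
    and w :: "real^'m"
    and R :: "real^'n^'m"
  assumes "bounded \<Omega>" and "open \<Omega>"
    and "lam \<noteq> 0"
    and "Cq q (\<Omega> \<times> \<Omega>) k"
    and "Cq q \<Omega> f"
    and "inj x" and "\<And>i. x i \<in> closure \<Omega>"
    and "inj y" and "\<And>i. y i \<in> closure \<Omega>"
  shows
    "let K = (\<chi> i j. k (x i, y j)) :: real^'m^'n;
         W = (\<chi> i j. if i = j then w$i else 0) :: real^'m^'m;
         fX = (\<chi> i. f (x i)) :: real^'n;
         S = {u :: real^'n. (lam *\<^sub>R mat 1 - K ** W ** R) *v u = fX};
         T = {u :: 'a \<Rightarrow> real. Cq q \<Omega> u \<and> (\<forall>z. z \<notin> closure \<Omega> \<longrightarrow> u z = 0) \<and>
                (\<forall>z\<in>closure \<Omega>. lam * u z - Kh k y w R x u z = f z)}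
     in (S \<noteq> {} \<longleftrightarrow> T \<noteq> {}) \<and>
        (S \<noteq> {} \<longrightarrow> affine S \<and> fun_affine T \<and> fun_finite_dim T \<and>
                     aff_dim S = int (fun_aff_dim T))"
proof -
  define L where "L v z = (\<Sum>i\<in>UNIV. w$i * k (z, y i) * (\<Sum>l\<in>UNIV. R$i$l * v$l))"
    for v :: "real^'n" and z
  define S where "S = {v. \<forall>j. lam * v$j - L v (x j) = f (x j)}"
  obtain c \<Psi> where lin: "Vector_Spaces.linear (*\<^sub>R) fun_scale \<Psi>"
    and interpolant: "nystrom_interpolant (closure \<Omega>) lam f L = (\<lambda>v. c + \<Psi> v)"
    by (rule nystrom_interpolant_affine[where L = L])
      (simp_all add: L_def algebra_simps sum.distrib sum_distrib_left)
  have "Cq q \<Omega> (nystrom_interpolant (closure \<Omega>) lam f L v)" for v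
    unfolding L_def[abs_def] using assms(2,1,4,5,9) by (rule Cq_nystrom_interpolant)
  with assms(3,7) have "{u. Cq q \<Omega> u \<and> (\<forall>z. z \<notin> closure \<Omega> \<longrightarrow> u z = 0) \<and>
      (\<forall>z\<in>closure \<Omega>. lam * u z - L (\<chi> j. u (x j)) z = f z)} = nystrom_interpolant (closure \<Omega>) lam f L ` S"
    unfolding S_def by (rule nystrom_solutions_eq_image)
  moreover have "Kh k y w R x u = L (\<chi> j. u (x j))" for u
    by (simp add: Kh_def L_def fun_eq_iff)
  ultimately have T_eq: "{u. Cq q \<Omega> u \<and> (\<forall>z. z \<notin> closure \<Omega> \<longrightarrow> u z = 0) \<and>
      (\<forall>z\<in>closure \<Omega>. lam * u z - Kh k y w R x u z = f z)} = (\<lambda>v. c + \<Psi> v) ` S"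
    by (simp add: interpolant)
  have inj: "inj_on (\<lambda>v. c + \<Psi> v) S"
    using inj_on_nystrom_interpolant[OF assms(3,7), where f = f and L = L]
    by (simp add: interpolant S_def)
  have S_eq: "{v. (lam *\<^sub>R mat 1 - ((\<chi> i j. k (x i, y j)) :: real^'m^'n)
            ** ((\<chi> i j. if i = j then w$i else 0) :: real^'m^'m) ** R) *v v = (\<chi> i. f (x i))} = S"
    by (simp add: nystrom_matrix_mult_vec vec_eq_iff S_def L_def)
  have "affine S"
    unfolding S_eq[symmetric] by (rule affine_matrix_vector_solutions)
  then show ?thesis
    unfolding Let_def S_eq T_eq
    using fun_affine_affine_image[OF lin] fun_finite_dim_affine_image[OF lin]
      fun_aff_dim_affine_image[OF lin _ _ inj]
    by auto
qed

end
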